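(* Let $n\ge 5$. Suppose a group-testing measurement matrix $A$ for $\mathcal{G}^4_n$ distinguishes all binary vectors $x\in\{0,1\}^n$ having at most two ones, meaning that distinct such vectors give distinct outcome vectors. Then $A$ has at least $\lfloor n/4\rfloor$ rows.
   Context: $\mathcal{G}^4_n$ is the graph on $\{1,\dots,n\}$ in which each node $i$ is adjacent to $i\pm1$ and $i\pm2 \pmod n$. A group-testing measurement matrix for a graph $G$ on $\{1,\dots,n\}$ is a matrix $A\in\{0,1\}^{m\times n}$ in which every nonzero row has a support that induces a connected subgraph of $G$. Given $x\in\{0,1\}^n$, the outcome of row $i$ is the Boolean OR $\bigvee_{j:A_{ij}=1}x_j$. *)

theory Defs
  imports Main
begin

(* Vertices of G^4_n are 0..n-1 (representing 1..n, indices mod n). *)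
definition G4_adj :: "nat \<Rightarrow> nat \<Rightarrow> nat \<Rightarrow> bool" where
  "G4_adj n i j \<longleftrightarrow> i < n \<and> j < n \<and> i \<noteq> j \<and>
     ((j + n - i) mod n \<in> {1, 2, n - 1, n - 2})"

definition induces_connected :: "nat \<Rightarrow> nat set \<Rightarrow> bool" where
  "induces_connected n S \<longleftrightarrow> S \<noteq> {} \<and>
     (\<forall>u\<in>S. \<forall>v\<in>S. (u, v) \<in> {(a, b). a \<in> S \<and> b \<in> S \<and> G4_adj n a b}\<^sup>*)"

(* A 0/1 matrix with m rows and n columns, given as the list of row supports. *)
definition is_G4_measurement_matrix :: "nat \<Rightarrow> nat set list \<Rightarrow> bool" where
  "is_G4_measurement_matrix n A \<longleftrightarrow>
     (\<forall>R\<in>set A. R \<subseteq> {0..<n} \<and> (R \<noteq> {} \<longrightarrow> induces_connected n R))"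

(* A binary vector x is represented by its support X \<subseteq> {0..<n};
   the outcome of row R is the OR of x_j over j in R. *)
definition outcome :: "nat set list \<Rightarrow> nat set \<Rightarrow> bool list" where
  "outcome A X = map (\<lambda>R. \<exists>j\<in>R. j \<in> X) A"

definition distinguishes_le2 :: "nat \<Rightarrow> nat set list \<Rightarrow> bool" where
  "distinguishes_le2 n A \<longleftrightarrow>
     (\<forall>X Y. X \<subseteq> {0..<n} \<longrightarrow> Y \<subseteq> {0..<n} \<longrightarrow> card X \<le> 2 \<longrightarrow> card Y \<le> 2 \<longrightarrow>
        X \<noteq> Y \<longrightarrow> outcome A X \<noteq> outcome A Y)"

end

theory Submission
  imports Defs
begin

(*
  Vertices are 0..n-1 on a cycle; edges join vertices at cyclic distance 1 or 2.
  Call a position t a left end of a row support R if t-1, t are not in R but t+1 is,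
  and a right end if t-1 is in R but t, t+1 are not.  A walk of steps of length at
  most 2 can never jump over two consecutive missing vertices, so a connected R
  has at most one left end and at most one right end; its boundary (the set of its
  ends) therefore has at most two elements.

  For every j < n div 2 the tests {2j, 2j+1} and {2j+2, 2j+3} must be told apart
  by some row, and any row that separates them has an end in the block
  {2j+1, 2j+2}.  These n div 2 blocks are pairwise disjoint, so they need
  n div 2 distinct boundary points, while m rows supply at most 2m of them.
  Hence 2m >= n div 2, i.e. m >= n div 4.
*)

definition cyc_succ :: "nat \<Rightarrow> nat \<Rightarrow> nat" where
  "cyc_succ n t = (if Suc t < n then Suc t else 0)"

definition cyc_pred :: "nat \<Rightarrow> nat \<Rightarrow> nat" where
  "cyc_pred n t = (if t = 0 then n - 1 else t - 1)"

definition cyc_dist :: "nat \<Rightarrow> nat \<Rightarrow> nat \<Rightarrow> nat" where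
  "cyc_dist n p u = (if p \<le> u then u - p else u + n - p)"

lemma cyc_succ_lt: "t < n \<Longrightarrow> cyc_succ n t < n"
  unfolding cyc_succ_def by auto

lemma cyc_pred_lt: "t < n \<Longrightarrow> cyc_pred n t < n"
  unfolding cyc_pred_def by auto

lemma cyc_succ_pred: "t < n \<Longrightarrow> cyc_succ n (cyc_pred n t) = t"
  unfolding cyc_succ_def cyc_pred_def by auto

lemma cyc_pred_succ: "t < n \<Longrightarrow> cyc_pred n (cyc_succ n t) = t"
  unfolding cyc_succ_def cyc_pred_def by auto

lemma cyc_dist_lt: "p < n \<Longrightarrow> u < n \<Longrightarrow> cyc_dist n p u < n"
  unfolding cyc_dist_def by auto

lemma cyc_dist_self: "cyc_dist n p p = 0"
  unfolding cyc_dist_def by simp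

lemma cyc_dist_inj:
  "p < n \<Longrightarrow> u < n \<Longrightarrow> w < n \<Longrightarrow> cyc_dist n p u = cyc_dist n p w \<Longrightarrow> u = w"
  unfolding cyc_dist_def by (auto split: if_splits)

text \<open>Distances add modulo \<open>n\<close>; this transports edge lengths to distances from a base point.\<close>
lemma cyc_dist_add:
  assumes "p < n" "z < n" "w < n"
  shows "cyc_dist n p w = (if cyc_dist n p z + cyc_dist n z w < n
           then cyc_dist n p z + cyc_dist n z w else cyc_dist n p z + cyc_dist n z w - n)"
  using assms unfolding cyc_dist_def by (auto split: if_splits)

lemma cyc_dist_succ:
  "p < n \<Longrightarrow> u < n \<Longrightarrow>
   cyc_dist n p (cyc_succ n u) = (if cyc_dist n p u + 1 < n then cyc_dist n p u + 1 else 0)"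
  unfolding cyc_dist_def cyc_succ_def by (auto split: if_splits)

lemma cyc_dist_pred:
  "p < n \<Longrightarrow> u < n \<Longrightarrow>
   cyc_dist n p (cyc_pred n u) = (if cyc_dist n p u = 0 then n - 1 else cyc_dist n p u - 1)"
  unfolding cyc_dist_def cyc_pred_def by (auto split: if_splits)

lemma cyc_dist_from_pred:
  "p < n \<Longrightarrow> u < n \<Longrightarrow>
   cyc_dist n (cyc_pred n p) u = (if cyc_dist n p u + 1 < n then cyc_dist n p u + 1 else 0)"
  unfolding cyc_dist_def cyc_pred_def by (auto split: if_splits)

lemma mod_eq_cyc_dist: "u < n \<Longrightarrow> v < n \<Longrightarrow> (v + n - u) mod n = cyc_dist n u v"
proof (cases "u \<le> v")
  case True
  assume "u < n" "v < n"
  then have "(v + n - u) mod n = (v - u) mod n" using True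
    by (metis Nat.add_diff_assoc2 mod_add_self2)
  then show ?thesis using \<open>v < n\<close> True by (simp add: cyc_dist_def)
qed (simp add: cyc_dist_def)

lemma G4_adj_cyc_dist:
  "G4_adj n u v \<Longrightarrow> u < n \<and> v < n \<and> cyc_dist n u v \<in> {1, 2, n - 1, n - 2}"
  unfolding G4_adj_def using mod_eq_cyc_dist by metis

section \<open>Connected sets cannot cross two double gaps\<close>

text \<open>
  Let \<open>p, p+1\<close> and \<open>q, q+1\<close> be missing from a connected \<open>R\<close>.  Measured from \<open>p\<close>,
  the vertices of \<open>R\<close> reachable from an element strictly between \<open>p+1\<close> and \<open>q\<close> stay
  there, since an edge of length at most 2 cannot jump over a double gap.  So \<open>R\<close>
  cannot also contain an element strictly between \<open>q+1\<close> and \<open>p\<close>.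
\<close>
lemma double_gap_barrier:
  assumes conn: "induces_connected n R" and sub: "R \<subseteq> {0..<n}" and n5: "n \<ge> 5"
    and pq: "p < n" "q < n"
    and gaps: "p \<notin> R" "cyc_succ n p \<notin> R" "q \<notin> R" "cyc_succ n q \<notin> R"
    and xy: "x \<in> R" "y \<in> R"
    and x_inside: "2 \<le> cyc_dist n p x" "cyc_dist n p x < cyc_dist n p q"
    and y_outside: "cyc_dist n p q + 1 < cyc_dist n p y"
  shows False
proof -
  let ?E = "{(a, b). a \<in> R \<and> b \<in> R \<and> G4_adj n a b}"
  let ?inside = "\<lambda>z. 2 \<le> cyc_dist n p z \<and> cyc_dist n p z < cyc_dist n p q"
  have y_lt: "y < n" using sub xy by auto
  have q_room: "cyc_dist n p q + 1 < n" using cyc_dist_lt[OF pq(1) y_lt] y_outside by simp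
  have dist_sp: "cyc_dist n p (cyc_succ n p) = 1"
    using cyc_dist_succ[OF pq(1) pq(1)] n5 cyc_dist_self[of n p] by simp
  have dist_sq: "cyc_dist n p (cyc_succ n q) = cyc_dist n p q + 1"
    using cyc_dist_succ[OF pq] q_room by simp
  have "(x, y) \<in> ?E\<^sup>*" using conn xy unfolding induces_connected_def by blast
  then have "?inside y"
  proof (induction rule: rtrancl_induct)
    case base
    show ?case using x_inside by simp
  next
    case (step z z')
    then have z': "z' \<in> R" and edge: "G4_adj n z z'" by auto
    from G4_adj_cyc_dist[OF edge]
    have zn: "z < n" "z' < n" and len: "cyc_dist n z z' \<in> {1, 2, n - 1, n - 2}" by auto
    have "z' \<noteq> p" "z' \<noteq> cyc_succ n p" "z' \<noteq> q" "z' \<noteq> cyc_succ n q" using gaps z' by auto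
    then have not_gap: "cyc_dist n p z' \<notin> {0, 1, cyc_dist n p q, cyc_dist n p q + 1}"
      using cyc_dist_inj[OF pq(1) zn(2)] cyc_dist_self[of n p] dist_sp dist_sq pq
        cyc_succ_lt by (metis empty_iff insert_iff)
    show ?case
      using cyc_dist_add[OF pq(1) zn] step.IH len not_gap q_room n5 by auto
  qed
  then show False using y_outside by simp
qed

section \<open>Ends of a row support\<close>

definition left_end :: "nat \<Rightarrow> nat set \<Rightarrow> nat \<Rightarrow> bool" where
  "left_end n R t \<longleftrightarrow> cyc_pred n t \<notin> R \<and> t \<notin> R \<and> cyc_succ n t \<in> R"

definition right_end :: "nat \<Rightarrow> nat set \<Rightarrow> nat \<Rightarrow> bool" where
  "right_end n R t \<longleftrightarrow> cyc_pred n t \<in> R \<and> t \<notin> R \<and> cyc_succ n t \<notin> R"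

definition boundary :: "nat \<Rightarrow> nat set \<Rightarrow> nat set" where
  "boundary n R = {t. t < n \<and> (left_end n R t \<or> right_end n R t)}"

text \<open>
  Two distinct left ends \<open>t, s\<close> put the double gaps \<open>t-1, t\<close> and \<open>s-1, s\<close> around the cycle
  with \<open>t+1\<close> on one side and \<open>s+1\<close> on the other (measured from \<open>t-1\<close>).
\<close>
lemma two_left_ends_positions:
  assumes n: "n \<ge> 5" and ts: "t < n" "s < n"
    and h: "s \<noteq> t" "cyc_succ n t \<noteq> cyc_pred n s" "cyc_succ n t \<noteq> s"
      "cyc_succ n s \<noteq> cyc_pred n t" "cyc_succ n s \<noteq> t"
  shows "2 \<le> cyc_dist n (cyc_pred n t) (cyc_succ n t)
    \<and> cyc_dist n (cyc_pred n t) (cyc_succ n t) < cyc_dist n (cyc_pred n t) (cyc_pred n s)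
    \<and> cyc_dist n (cyc_pred n t) (cyc_pred n s) + 1 < cyc_dist n (cyc_pred n t) (cyc_succ n s)"
proof -
  define d where "d = cyc_dist n t s"
  have d_lt: "d < n" using cyc_dist_lt ts d_def by simp
  have ne: "cyc_dist n t (cyc_succ n t) \<noteq> cyc_dist n t (cyc_pred n s)"
    "cyc_dist n t (cyc_succ n t) \<noteq> d" "cyc_dist n t (cyc_succ n s) \<noteq> cyc_dist n t (cyc_pred n t)"
    "cyc_dist n t (cyc_succ n s) \<noteq> 0" "d \<noteq> 0"
    using h cyc_dist_inj[OF ts(1)] cyc_succ_lt cyc_pred_lt ts cyc_dist_self[of n t] d_def by metis+
  note dists = cyc_dist_succ[OF ts(1) ts(1)] cyc_dist_succ[OF ts(1) ts(2)]
    cyc_dist_pred[OF ts(1) ts(1)] cyc_dist_pred[OF ts(1) ts(2)]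
    cyc_dist_from_pred[OF ts(1) cyc_succ_lt[OF ts(1)]] cyc_dist_from_pred[OF ts(1) cyc_succ_lt[OF ts(2)]]
    cyc_dist_from_pred[OF ts(1) cyc_pred_lt[OF ts(2)]]
  show ?thesis using ne dists cyc_dist_self[of n t] n d_lt unfolding d_def[symmetric]
    by (auto split: if_splits)
qed

lemma two_right_ends_positions:
  assumes n: "n \<ge> 5" and ts: "t < n" "s < n"
    and h: "s \<noteq> t" "cyc_pred n s \<noteq> t" "cyc_pred n s \<noteq> cyc_succ n t"
      "cyc_pred n t \<noteq> s" "cyc_pred n t \<noteq> cyc_succ n s"
  shows "2 \<le> cyc_dist n t (cyc_pred n s) \<and> cyc_dist n t (cyc_pred n s) < cyc_dist n t s
    \<and> cyc_dist n t s + 1 < cyc_dist n t (cyc_pred n t)"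
proof -
  define d where "d = cyc_dist n t s"
  have d_lt: "d < n" using cyc_dist_lt ts d_def by simp
  have ne: "cyc_dist n t (cyc_pred n s) \<noteq> 0" "cyc_dist n t (cyc_pred n s) \<noteq> cyc_dist n t (cyc_succ n t)"
    "cyc_dist n t (cyc_pred n t) \<noteq> d" "cyc_dist n t (cyc_pred n t) \<noteq> cyc_dist n t (cyc_succ n s)"
    "d \<noteq> 0"
    using h cyc_dist_inj[OF ts(1)] cyc_succ_lt cyc_pred_lt ts cyc_dist_self[of n t] d_def by metis+
  note dists = cyc_dist_succ[OF ts(1) ts(1)] cyc_dist_succ[OF ts(1) ts(2)]
    cyc_dist_pred[OF ts(1) ts(1)] cyc_dist_pred[OF ts(1) ts(2)]
  show ?thesis using ne dists cyc_dist_self[of n t] n d_lt unfolding d_def[symmetric]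
    by (auto split: if_splits)
qed

lemma left_end_unique:
  assumes conn: "induces_connected n R" and sub: "R \<subseteq> {0..<n}" and n5: "n \<ge> 5"
    and ts: "t < n" "s < n" and ends: "left_end n R t" "left_end n R s"
  shows "t = s"
proof (rule ccontr)
  assume "t \<noteq> s"
  then have "s \<noteq> t" "cyc_succ n t \<noteq> cyc_pred n s" "cyc_succ n t \<noteq> s"
    "cyc_succ n s \<noteq> cyc_pred n t" "cyc_succ n s \<noteq> t"
    using ends unfolding left_end_def by auto
  note pos = two_left_ends_positions[OF n5 ts this]
  show False
    by (rule double_gap_barrier[OF conn sub n5 cyc_pred_lt[OF ts(1)] cyc_pred_lt[OF ts(2)],
          of "cyc_succ n t" "cyc_succ n s"])
      (use ends pos cyc_succ_pred ts in \<open>auto simp: left_end_def\<close>)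
qed

lemma right_end_unique:
  assumes conn: "induces_connected n R" and sub: "R \<subseteq> {0..<n}" and n5: "n \<ge> 5"
    and ts: "t < n" "s < n" and ends: "right_end n R t" "right_end n R s"
  shows "t = s"
proof (rule ccontr)
  assume "t \<noteq> s"
  then have "s \<noteq> t" "cyc_pred n s \<noteq> t" "cyc_pred n s \<noteq> cyc_succ n t"
    "cyc_pred n t \<noteq> s" "cyc_pred n t \<noteq> cyc_succ n s"
    using ends unfolding right_end_def by auto
  note pos = two_right_ends_positions[OF n5 ts this]
  show False
    by (rule double_gap_barrier[OF conn sub n5 ts, of "cyc_pred n s" "cyc_pred n t"])
      (use ends pos in \<open>auto simp: right_end_def\<close>)
qed

lemma card_boundary_le_2:
  assumes sub: "R \<subseteq> {0..<n}" and row: "R \<noteq> {} \<longrightarrow> induces_connected n R"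
    and n5: "n \<ge> 5"
  shows "card (boundary n R) \<le> 2"
proof (cases "R = {}")
  case True
  then show ?thesis by (simp add: boundary_def left_end_def right_end_def)
next
  case False
  then have conn: "induces_connected n R" using row by simp
  let ?L = "{t. t < n \<and> left_end n R t}" and ?R = "{t. t < n \<and> right_end n R t}"
  have "card ?L \<le> 1"
    using card_le_Suc0_iff_eq[of ?L] left_end_unique[OF conn sub n5] by auto
  moreover have "card ?R \<le> 1"
    using card_le_Suc0_iff_eq[of ?R] right_end_unique[OF conn sub n5] by auto
  moreover have "boundary n R = ?L \<union> ?R" unfolding boundary_def by auto
  then have "card (boundary n R) \<le> card ?L + card ?R" using card_Un_le by simp
  ultimately show ?thesis by linarith
qed

section \<open>Rows separating two neighbouring pairs\<close>

lemma separating_set_boundary: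
  assumes a: "a < n"
    and sep: "(R \<inter> {a, cyc_succ n a} = {}) \<noteq>
              (R \<inter> {cyc_succ n (cyc_succ n a), cyc_succ n (cyc_succ n (cyc_succ n a))} = {})"
  shows "boundary n R \<inter> {cyc_succ n a, cyc_succ n (cyc_succ n a)} \<noteq> {}"
proof -
  define v1 where "v1 = cyc_succ n a"
  define v2 where "v2 = cyc_succ n v1"
  define v3 where "v3 = cyc_succ n v2"
  have lt: "v1 < n" "v2 < n" using a cyc_succ_lt unfolding v1_def v2_def by auto
  have pred: "cyc_pred n v1 = a" "cyc_pred n v2 = v1"
    using a lt cyc_pred_succ unfolding v1_def v2_def by auto
  have "left_end n R v1 \<or> left_end n R v2 \<or> right_end n R v1 \<or> right_end n R v2"
    using sep pred unfolding left_end_def right_end_def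
    by (fold v1_def v2_def v3_def) (auto simp: v2_def v3_def)
  then show ?thesis using lt unfolding boundary_def v1_def v2_def by auto
qed

lemma distinguishing_row:
  assumes n4: "n \<ge> 4" and a: "a < n" and D: "distinguishes_le2 n A"
  shows "\<exists>R\<in>set A. boundary n R \<inter> {cyc_succ n a, cyc_succ n (cyc_succ n a)} \<noteq> {}"
proof -
  define X where "X = {a, cyc_succ n a}"
  define Y where "Y = {cyc_succ n (cyc_succ n a), cyc_succ n (cyc_succ n (cyc_succ n a))}"
  have "a \<notin> Y" using n4 a unfolding Y_def cyc_succ_def by (simp split: if_splits)
  then have "X \<noteq> Y" unfolding X_def by blast
  moreover have "X \<subseteq> {0..<n}" "Y \<subseteq> {0..<n}" using a cyc_succ_lt unfolding X_def Y_def by auto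
  moreover have "card X \<le> 2" "card Y \<le> 2" unfolding X_def Y_def by (simp_all add: card_insert_if)
  ultimately have "outcome A X \<noteq> outcome A Y"
    using D unfolding distinguishes_le2_def by simp
  then obtain R where R: "R \<in> set A" and "(\<exists>k\<in>R. k \<in> X) \<noteq> (\<exists>k\<in>R. k \<in> Y)"
    unfolding outcome_def map_eq_conv by blast
  then have "(R \<inter> X = {}) \<noteq> (R \<inter> Y = {})" by blast
  then have "boundary n R \<inter> {cyc_succ n a, cyc_succ n (cyc_succ n a)} \<noteq> {}"
    using separating_set_boundary[OF a] unfolding X_def Y_def by simp
  with R show ?thesis by blast
qed

lemma blocks_disjoint:
  assumes "n \<ge> 5" "j < n div 2" "j' < n div 2"
    and "t \<in> {cyc_succ n (2*j), cyc_succ n (cyc_succ n (2*j))}"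
    and "t \<in> {cyc_succ n (2*j'), cyc_succ n (cyc_succ n (2*j'))}"
  shows "j = j'"
proof -
  have first: "cyc_succ n (2*i) = Suc (2*i)" if "i < n div 2" for i
    using that unfolding cyc_succ_def by auto
  have "t \<in> {Suc (2*j), cyc_succ n (Suc (2*j))}" "t \<in> {Suc (2*j'), cyc_succ n (Suc (2*j'))}"
    using assms(4,5) first[OF assms(2)] first[OF assms(3)] by simp_all
  then show ?thesis using assms(1-3) unfolding cyc_succ_def by (auto split: if_splits; presburger)
qed

lemma disjoint_blocks_card:
  assumes U: "finite U"
    and meet: "\<And>j. j < k \<Longrightarrow> B j \<inter> U \<noteq> {}"
    and disj: "\<And>j j' t. j < k \<Longrightarrow> j' < k \<Longrightarrow> t \<in> B j \<Longrightarrow> t \<in> B j' \<Longrightarrow> j = j'"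
  shows "k \<le> card U"
proof -
  have "\<forall>j\<in>{..<k}. \<exists>t. t \<in> B j \<inter> U" using meet by blast
  from bchoice[OF this] obtain f where f: "\<forall>j\<in>{..<k}. f j \<in> B j \<inter> U" by blast
  have "inj_on f {..<k}"
  proof (rule inj_onI)
    fix j j' assume jk: "j \<in> {..<k}" "j' \<in> {..<k}" and same: "f j = f j'"
    have "f j \<in> B j" "f j' \<in> B j'" using f jk by blast+
    then have "f j \<in> B j" "f j \<in> B j'" using same by simp_all
    with jk show "j = j'" using disj by simp
  qed
  moreover have "f ` {..<k} \<subseteq> U" using f by auto
  ultimately have "card {..<k} \<le> card U" using U by (rule card_inj_on_le)
  then show ?thesis by simp
qed

lemma card_all_boundaries:
  assumes n5: "n \<ge> 5" and M: "is_G4_measurement_matrix n A"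
  shows "card (\<Union>R\<in>set A. boundary n R) \<le> 2 * length A"
proof -
  have "card (\<Union>R\<in>set A. boundary n R) \<le> (\<Sum>R\<in>set A. card (boundary n R))"
    by (rule card_UN_le) simp
  also have "\<dots> \<le> (\<Sum>R\<in>set A. 2)"
  proof (rule sum_mono)
    fix R assume "R \<in> set A"
    with M have "R \<subseteq> {0..<n}" "R \<noteq> {} \<longrightarrow> induces_connected n R"
      unfolding is_G4_measurement_matrix_def by auto
    then show "card (boundary n R) \<le> 2" using n5 by (rule card_boundary_le_2)
  qed
  also have "\<dots> \<le> 2 * length A" using card_length[of A] by simp
  finally show ?thesis .
qed

theorem proposition1:
  fixes n :: nat and A :: "nat set list"
  assumes "n \<ge> 5"
    and "is_G4_measurement_matrix n A"
    and "distinguishes_le2 n A"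
  shows "length A \<ge> n div 4"
proof -
  let ?U = "\<Union>R\<in>set A. boundary n R"
  let ?B = "\<lambda>j. {cyc_succ n (2*j), cyc_succ n (cyc_succ n (2*j))}"
  have meet: "?B j \<inter> ?U \<noteq> {}" if "j < n div 2" for j
  proof -
    have "2*j < n" using that by linarith
    then obtain R where "R \<in> set A" "boundary n R \<inter> ?B j \<noteq> {}"
      using distinguishing_row[OF _ _ assms(3)] assms(1) by fastforce
    then show ?thesis by blast
  qed
  have "finite ?U" unfolding boundary_def by simp
  then have "n div 2 \<le> card ?U"
    using meet blocks_disjoint[OF assms(1)] by (rule disjoint_blocks_card)
  also have "\<dots> \<le> 2 * length A" using card_all_boundaries[OF assms(1,2)] .
  finally show ?thesis by linarith
qed

end
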